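(* Consider the following TOPSIS procedure, parametrized by a metric $\rho$ on $\tilde{\mathbb{I}}$. Given $n$ alternatives $A_1,\dots,A_n$, $m$ attributes $\mathscr{O}_1,\dots,\mathscr{O}_m$ each classified as benefit or cost, an intuitionistic fuzzy decision matrix $R=(r_{ij})_{n\times m}$ with $r_{ij}=\langle\mu_{ij},\nu_{ij}\rangle\in\tilde{\mathbb{I}}$, real weights $\omega_j\in(0,1]$ with $\sum_j\omega_j=1$, and $\lambda\ge1$: (i) $\bar r_{ij}=\langle\bar\mu_{ij},\bar\nu_{ij}\rangle=r_{ij}$ for benefit attributes and $\bar r_{ij}=\langle\nu_{ij},\mu_{ij}\rangle$ for cost attributes; (ii) $\langle\mu_j^+,\nu_j^+\rangle=\langle\max_i\bar\mu_{ij},\min_i\bar\nu_{ij}\rangle$, $\langle\mu_j^-,\nu_j^-\rangle=\langle\min_i\bar\mu_{ij},\max_i\bar\nu_{ij}\rangle$; (iii) $\mathbf{S}(A_i,\mathbf{A}^{\pm})=1-\sum_{j=1}^m\omega_j\,\rho(\bar r_{ij},\langle\mu_j^{\pm},\nu_j^{\pm}\rangle)$; (iv) $\mathscr{C}_i=\frac{\mathbf{S}(A_i,\mathbf{A}^+)}{\mathbf{S}(A_i,\mathbf{A}^+)+\mathbf{S}(A_i,\mathbf{A}^-)}$. Then: (a) with $\rho=\tilde\varrho^{(\lambda)}$, the procedure is increasing with $\le_{ZX}$, i.e., if $\bar r_{i_1j}\le_{ZX}\bar r_{i_2j}$ for all $j$, then $\mathscr{C}_{i_1}\le\mathscr{C}_{i_2}$;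 (b) with $\rho=\varrho^{(\lambda)}_{A,B}$, the procedure is increasing with $\le_{A,B}$, i.e., if $\bar r_{i_1j}\le_{A,B}\bar r_{i_2j}$ for all $j$, then $\mathscr{C}_{i_1}\le\mathscr{C}_{i_2}$.
   Context: $\tilde{\mathbb{I}}=\{\langle\mu,\nu\rangle\in[0,1]^2\mid\mu+\nu\le1\}$. For $\alpha=\langle\mu_\alpha,\nu_\alpha\rangle$: $h(\alpha)=\mu_\alpha+\nu_\alpha$, $\pi_\alpha=1-\mu_\alpha-\nu_\alpha$, $L(\alpha)=\frac{1-\nu_\alpha}{1+\pi_\alpha}$. Order $\le_{ZX}$: $\alpha<_{ZX}\beta$ if $L(\alpha)<L(\beta)$, or $L(\alpha)=L(\beta)$ and $h(\alpha)<h(\beta)$; $\alpha\le_{ZX}\beta$ means $\alpha<_{ZX}\beta$ or $\alpha=\beta$. $\tilde\varrho^{(\lambda)}(\alpha,\beta)=\frac{1}{1+\lambda}(1+\lambda|L(\alpha)-L(\beta)|)$ if $L(\alpha)\ne L(\beta)$, and $=\frac{1}{1+\lambda}|h(\alpha)-h(\beta)|$ otherwise. An aggregation function is $A:[0,1]^2\to[0,1]$ nondecreasing in each variable with $A(0,0)=0$, $A(1,1)=1$. $A,B$ are continuous aggregation functions such that $A(x_1,y_1)=A(x_2,y_2)$ and $B(x_1,y_1)=B(x_2,y_2)$ together imply $(x_1,y_1)=(x_2,y_2)$. Put $\overline{A}(\alpha)=A(\mu_\alpha,1-\nu_\alpha)$, $\overline{B}(\alpha)=B(\mu_\alpha,1-\nu_\alpha)$.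 Order $\le_{A,B}$: $\alpha\le_{A,B}\beta$ iff $\overline{A}(\alpha)<\overline{A}(\beta)$ or ($\overline{A}(\alpha)=\overline{A}(\beta)$ and $\overline{B}(\alpha)\le\overline{B}(\beta)$). $\varrho^{(\lambda)}_{A,B}(\alpha,\beta)=\frac12(1+|\overline{A}(\alpha)-\overline{A}(\beta)|)$ if $\overline{A}(\alpha)\ne\overline{A}(\beta)$, and $=\frac12|\overline{B}(\alpha)-\overline{B}(\beta)|$ otherwise. *)

theory Defs
  imports "HOL-Analysis.Analysis"
begin

definition IFV :: "(real \<times> real) set" where
  "IFV = {(\<mu>, \<nu>). 0 \<le> \<mu> \<and> \<mu> \<le> 1 \<and> 0 \<le> \<nu> \<and> \<nu> \<le> 1 \<and> \<mu> + \<nu> \<le> 1}"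

definition hdeg :: "real \<times> real \<Rightarrow> real" where
  "hdeg a = fst a + snd a"

definition hes :: "real \<times> real \<Rightarrow> real" where
  "hes a = 1 - fst a - snd a"

definition Lval :: "real \<times> real \<Rightarrow> real" where
  "Lval a = (1 - snd a) / (1 + hes a)"

definition zx_less :: "real \<times> real \<Rightarrow> real \<times> real \<Rightarrow> bool" where
  "zx_less a b \<longleftrightarrow> Lval a < Lval b \<or> (Lval a = Lval b \<and> hdeg a < hdeg b)"

definition zx_le :: "real \<times> real \<Rightarrow> real \<times> real \<Rightarrow> bool" where
  "zx_le a b \<longleftrightarrow> zx_less a b \<or> a = b"

definition rho_zx :: "real \<Rightarrow> real \<times> real \<Rightarrow> real \<times> real \<Rightarrow> real" where
  "rho_zx lam a b =
     (if Lval a \<noteq> Lval b then (1 + lam * \<bar>Lval a - Lval b\<bar>) / (1 + lam)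
      else \<bar>hdeg a - hdeg b\<bar> / (1 + lam))"

definition aggregation_fun :: "(real \<Rightarrow> real \<Rightarrow> real) \<Rightarrow> bool" where
  "aggregation_fun A \<longleftrightarrow>
     (\<forall>x\<in>{0..1}. \<forall>y\<in>{0..1}. A x y \<in> {0..1}) \<and>
     (\<forall>x1\<in>{0..1}. \<forall>x2\<in>{0..1}. \<forall>y\<in>{0..1}. x1 \<le> x2 \<longrightarrow> A x1 y \<le> A x2 y) \<and>
     (\<forall>x\<in>{0..1}. \<forall>y1\<in>{0..1}. \<forall>y2\<in>{0..1}. y1 \<le> y2 \<longrightarrow> A x y1 \<le> A x y2) \<and>
     A 0 0 = 0 \<and> A 1 1 = 1"

definition Abar :: "(real \<Rightarrow> real \<Rightarrow> real) \<Rightarrow> real \<times> real \<Rightarrow> real" where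
  "Abar A a = A (fst a) (1 - snd a)"

definition le_AB :: "(real \<Rightarrow> real \<Rightarrow> real) \<Rightarrow> (real \<Rightarrow> real \<Rightarrow> real) \<Rightarrow>
    real \<times> real \<Rightarrow> real \<times> real \<Rightarrow> bool" where
  "le_AB A B a b \<longleftrightarrow> Abar A a < Abar A b \<or> (Abar A a = Abar A b \<and> Abar B a \<le> Abar B b)"

definition rho_AB :: "(real \<Rightarrow> real \<Rightarrow> real) \<Rightarrow> (real \<Rightarrow> real \<Rightarrow> real) \<Rightarrow>
    real \<times> real \<Rightarrow> real \<times> real \<Rightarrow> real" where
  "rho_AB A B a b =
     (if Abar A a \<noteq> Abar A b then (1 + \<bar>Abar A a - Abar A b\<bar>) / 2
      else \<bar>Abar B a - Abar B b\<bar> / 2)"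

text \<open>TOPSIS procedure. Alternatives indexed by i < n, attributes by j < m;
  ben j holds iff attribute j is a benefit attribute (otherwise cost).\<close>
definition rnorm :: "(nat \<Rightarrow> bool) \<Rightarrow> (nat \<Rightarrow> nat \<Rightarrow> real \<times> real) \<Rightarrow> nat \<Rightarrow> nat \<Rightarrow> real \<times> real" where
  "rnorm ben r i j = (if ben j then r i j else (snd (r i j), fst (r i j)))"

definition ideal_pos :: "nat \<Rightarrow> (nat \<Rightarrow> bool) \<Rightarrow> (nat \<Rightarrow> nat \<Rightarrow> real \<times> real) \<Rightarrow> nat \<Rightarrow> real \<times> real" where
  "ideal_pos n ben r j =
     (Max ((\<lambda>i. fst (rnorm ben r i j)) ` {..<n}), Min ((\<lambda>i. snd (rnorm ben r i j)) ` {..<n}))"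

definition ideal_neg :: "nat \<Rightarrow> (nat \<Rightarrow> bool) \<Rightarrow> (nat \<Rightarrow> nat \<Rightarrow> real \<times> real) \<Rightarrow> nat \<Rightarrow> real \<times> real" where
  "ideal_neg n ben r j =
     (Min ((\<lambda>i. fst (rnorm ben r i j)) ` {..<n}), Max ((\<lambda>i. snd (rnorm ben r i j)) ` {..<n}))"

definition simil :: "(real \<times> real \<Rightarrow> real \<times> real \<Rightarrow> real) \<Rightarrow> nat \<Rightarrow> (nat \<Rightarrow> bool) \<Rightarrow>
    (nat \<Rightarrow> real) \<Rightarrow> (nat \<Rightarrow> nat \<Rightarrow> real \<times> real) \<Rightarrow> (nat \<Rightarrow> real \<times> real) \<Rightarrow> nat \<Rightarrow> real" where
  "simil \<rho> m ben \<omega> r ideal i = 1 - (\<Sum>j<m. \<omega> j * \<rho> (rnorm ben r i j) (ideal j))"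

definition closeness :: "(real \<times> real \<Rightarrow> real \<times> real \<Rightarrow> real) \<Rightarrow> nat \<Rightarrow> nat \<Rightarrow> (nat \<Rightarrow> bool) \<Rightarrow>
    (nat \<Rightarrow> real) \<Rightarrow> (nat \<Rightarrow> nat \<Rightarrow> real \<times> real) \<Rightarrow> nat \<Rightarrow> real" where
  "closeness \<rho> n m ben \<omega> r i =
     (let sp = simil \<rho> m ben \<omega> r (ideal_pos n ben r) i;
          sn = simil \<rho> m ben \<omega> r (ideal_neg n ben r) i
      in sp / (sp + sn))"

end

theory Submission
  imports Defs
begin

text \<open>Order intuitionistic fuzzy values componentwise (larger membership, smaller
non-membership). The ideal points of a column are its top and bottom in this order, and
both score functions, L and \<open>Abar A\<close>, are monotone for it. Hence for either metric an
alternative that is larger in the corresponding ranking order is no farther from the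
positive ideal point and no closer to the negative one, attribute by attribute. So
\<open>S(A\<^sub>i, A\<^sup>+)\<close> increases, \<open>S(A\<^sub>i, A\<^sup>-)\<close> decreases, and so does the ratio
\<open>C\<^sub>i = S\<^sup>+ / (S\<^sup>+ + S\<^sup>-)\<close>.\<close>

definition ifv_le :: "real \<times> real \<Rightarrow> real \<times> real \<Rightarrow> bool" where
  "ifv_le a b \<longleftrightarrow> fst a \<le> fst b \<and> snd b \<le> snd a"

lemma Lval_less_iff:
  assumes "a \<in> IFV" "p \<in> IFV"
  shows "Lval a < Lval p \<longleftrightarrow> (1 - snd a) * (1 - fst p) < (1 - snd p) * (1 - fst a)"
  using assms unfolding Lval_def hes_def IFV_def by (auto simp: divide_simps algebra_simps)

lemma Lval_strict_mono:
  assumes "a \<in> IFV" "p \<in> IFV" "ifv_le a p" "a \<noteq> p"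
  shows "Lval a < Lval p"
proof -
  obtain \<mu> \<nu> \<mu>' \<nu>' where a: "a = (\<mu>, \<nu>)" and p: "p = (\<mu>', \<nu>')" by fastforce
  have h: "0 \<le> \<mu>" "0 \<le> \<nu>'" "\<mu> + \<nu> \<le> 1" "\<mu>' + \<nu>' \<le> 1" "\<mu> \<le> \<mu>'" "\<nu>' \<le> \<nu>"
    "\<mu> < \<mu>' \<or> \<nu>' < \<nu>"
    using assms unfolding a p IFV_def ifv_le_def by auto
  have "(1 - \<nu>) * (1 - \<mu>') < (1 - \<nu>') * (1 - \<mu>)"
  proof (cases "\<mu> < \<mu>'")
    case True
    have "(1 - \<nu>) * (1 - \<mu>') \<le> (1 - \<nu>') * (1 - \<mu>')"
      using h by (intro mult_right_mono) auto
    also have "\<dots> < (1 - \<nu>') * (1 - \<mu>)"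
      using h True by (intro mult_strict_left_mono) auto
    finally show ?thesis .
  next
    case False
    then have "\<nu>' < \<nu>" using h by auto
    have "(1 - \<nu>) * (1 - \<mu>') \<le> (1 - \<nu>) * (1 - \<mu>)"
      using h by (intro mult_left_mono) auto
    also have "\<dots> < (1 - \<nu>') * (1 - \<mu>)"
      using h \<open>\<nu>' < \<nu>\<close> by (intro mult_strict_right_mono) auto
    finally show ?thesis .
  qed
  with Lval_less_iff[OF assms(1,2)] show ?thesis unfolding a p by simp
qed

lemma Lval_nonneg: "a \<in> IFV \<Longrightarrow> 0 \<le> Lval a"
  unfolding IFV_def Lval_def hes_def by auto

lemma Lval_le_1: "a \<in> IFV \<Longrightarrow> Lval a \<le> 1"
  unfolding IFV_def Lval_def hes_def by (auto simp: divide_simps)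

lemma hdeg_nonneg: "a \<in> IFV \<Longrightarrow> 0 \<le> hdeg a"
  unfolding IFV_def hdeg_def by auto

lemma hdeg_le_1: "a \<in> IFV \<Longrightarrow> hdeg a \<le> 1"
  unfolding IFV_def hdeg_def by auto

lemma rnorm_in_IFV: "r i j \<in> IFV \<Longrightarrow> rnorm ben r i j \<in> IFV"
  unfolding rnorm_def IFV_def by auto

lemma join_in_IFV:
  assumes "finite I" "I \<noteq> {}" "\<And>i. i \<in> I \<Longrightarrow> f i \<in> IFV"
  shows "(Max ((\<lambda>i. fst (f i)) ` I), Min ((\<lambda>i. snd (f i)) ` I)) \<in> IFV"
proof -
  obtain k where k: "k \<in> I" "Max ((\<lambda>i. fst (f i)) ` I) = fst (f k)"
    using Max_in[of "(\<lambda>i. fst (f i)) ` I"] assms(1,2) by blast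
  obtain l where l: "l \<in> I" "Min ((\<lambda>i. snd (f i)) ` I) = snd (f l)"
    using Min_in[of "(\<lambda>i. snd (f i)) ` I"] assms(1,2) by blast
  have "snd (f l) \<le> snd (f k)"
    using l k assms(1) by (metis Min_le finite_imageI image_eqI)
  then show ?thesis
    using k l assms(3)[of k] assms(3)[of l] unfolding IFV_def by auto
qed

lemma meet_in_IFV:
  assumes "finite I" "I \<noteq> {}" "\<And>i. i \<in> I \<Longrightarrow> f i \<in> IFV"
  shows "(Min ((\<lambda>i. fst (f i)) ` I), Max ((\<lambda>i. snd (f i)) ` I)) \<in> IFV"
proof -
  obtain k where k: "k \<in> I" "Max ((\<lambda>i. snd (f i)) ` I) = snd (f k)"
    using Max_in[of "(\<lambda>i. snd (f i)) ` I"] assms(1,2) by blast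
  obtain l where l: "l \<in> I" "Min ((\<lambda>i. fst (f i)) ` I) = fst (f l)"
    using Min_in[of "(\<lambda>i. fst (f i)) ` I"] assms(1,2) by blast
  have "fst (f l) \<le> fst (f k)"
    using l k assms(1) by (metis Min_le finite_imageI image_eqI)
  then show ?thesis
    using k l assms(3)[of k] assms(3)[of l] unfolding IFV_def by auto
qed

lemma ideal_pos_in_IFV:
  assumes "0 < n" "\<And>i. i < n \<Longrightarrow> r i j \<in> IFV"
  shows "ideal_pos n ben r j \<in> IFV"
  unfolding ideal_pos_def using assms by (intro join_in_IFV) (auto intro: rnorm_in_IFV)

lemma ideal_neg_in_IFV:
  assumes "0 < n" "\<And>i. i < n \<Longrightarrow> r i j \<in> IFV"
  shows "ideal_neg n ben r j \<in> IFV"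
  unfolding ideal_neg_def using assms by (intro meet_in_IFV) (auto intro: rnorm_in_IFV)

lemma ifv_le_ideal_pos: "i < n \<Longrightarrow> ifv_le (rnorm ben r i j) (ideal_pos n ben r j)"
  unfolding ifv_le_def ideal_pos_def by auto

lemma ifv_le_ideal_neg: "i < n \<Longrightarrow> ifv_le (ideal_neg n ben r j) (rnorm ben r i j)"
  unfolding ifv_le_def ideal_neg_def by auto

lemma rho_zx_nonneg:
  assumes "0 \<le> lam"
  shows "0 \<le> rho_zx lam a b"
  using assms unfolding rho_zx_def by auto

lemma rho_zx_le_1:
  assumes "0 \<le> lam" "a \<in> IFV" "b \<in> IFV"
  shows "rho_zx lam a b \<le> 1"
proof -
  have "\<bar>Lval a - Lval b\<bar> \<le> 1" "\<bar>hdeg a - hdeg b\<bar> \<le> 1"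
    using Lval_nonneg[of a] Lval_le_1[of a] hdeg_nonneg[of a] hdeg_le_1[of a]
      Lval_nonneg[of b] Lval_le_1[of b] hdeg_nonneg[of b] hdeg_le_1[of b] assms(2,3) by auto
  then have "lam * \<bar>Lval a - Lval b\<bar> \<le> lam"
    using assms(1) by (simp add: mult_left_le)
  with \<open>\<bar>hdeg a - hdeg b\<bar> \<le> 1\<close> show ?thesis
    unfolding rho_zx_def using assms(1) by (auto simp: divide_simps)
qed

lemma rho_zx_self: "rho_zx lam a a = 0"
  unfolding rho_zx_def by simp

lemma rho_zx_antimono_upper:
  assumes "0 \<le> lam" "a \<in> IFV" "b \<in> IFV" "p \<in> IFV"
    and "zx_le a b" "ifv_le a p" "ifv_le b p"
  shows "rho_zx lam b p \<le> rho_zx lam a p"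
proof (cases "b = p")
  case True
  then show ?thesis using rho_zx_self rho_zx_nonneg[OF assms(1)] by metis
next
  case False
  have "Lval a \<le> Lval b" using assms(5) unfolding zx_le_def zx_less_def by auto
  moreover have "Lval b < Lval p" using Lval_strict_mono False assms by blast
  ultimately show ?thesis
    unfolding rho_zx_def using assms(1) by (auto simp: divide_simps mult_left_mono)
qed

lemma rho_zx_mono_lower:
  assumes "0 \<le> lam" "a \<in> IFV" "b \<in> IFV" "q \<in> IFV"
    and "zx_le a b" "ifv_le q a" "ifv_le q b"
  shows "rho_zx lam a q \<le> rho_zx lam b q"
proof (cases "a = q")
  case True
  then show ?thesis using rho_zx_self rho_zx_nonneg[OF assms(1)] by metis
next
  case False
  have "Lval a \<le> Lval b" using assms(5) unfolding zx_le_def zx_less_def by auto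
  moreover have "Lval q < Lval a" using Lval_strict_mono False assms by metis
  ultimately show ?thesis
    unfolding rho_zx_def using assms(1) by (auto simp: divide_simps mult_left_mono)
qed

lemma Abar_nonneg: "aggregation_fun A \<Longrightarrow> a \<in> IFV \<Longrightarrow> 0 \<le> Abar A a"
  unfolding aggregation_fun_def Abar_def IFV_def by auto

lemma Abar_le_1: "aggregation_fun A \<Longrightarrow> a \<in> IFV \<Longrightarrow> Abar A a \<le> 1"
  unfolding aggregation_fun_def Abar_def IFV_def by auto

lemma Abar_mono:
  assumes "aggregation_fun A" "a \<in> IFV" "p \<in> IFV" "ifv_le a p"
  shows "Abar A a \<le> Abar A p"
proof -
  have mono1: "\<And>x1 x2 y. x1 \<in> {0..1} \<Longrightarrow> x2 \<in> {0..1} \<Longrightarrow> y \<in> {0..1} \<Longrightarrow> x1 \<le> x2 \<Longrightarrow> A x1 y \<le> A x2 y"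
   and mono2: "\<And>x y1 y2. x \<in> {0..1} \<Longrightarrow> y1 \<in> {0..1} \<Longrightarrow> y2 \<in> {0..1} \<Longrightarrow> y1 \<le> y2 \<Longrightarrow> A x y1 \<le> A x y2"
    using assms(1) unfolding aggregation_fun_def by blast+
  have "A (fst a) (1 - snd a) \<le> A (fst p) (1 - snd a)"
    by (rule mono1) (use assms(2-4) in \<open>auto simp: IFV_def ifv_le_def\<close>)
  also have "\<dots> \<le> A (fst p) (1 - snd p)"
    by (rule mono2) (use assms(2-4) in \<open>auto simp: IFV_def ifv_le_def\<close>)
  finally show ?thesis unfolding Abar_def .
qed

lemma rho_AB_le_1:
  assumes "aggregation_fun A" "aggregation_fun B" "a \<in> IFV" "b \<in> IFV"
  shows "rho_AB A B a b \<le> 1"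
  using Abar_nonneg[OF assms(1,3)] Abar_le_1[OF assms(1,3)] Abar_nonneg[OF assms(1,4)]
    Abar_le_1[OF assms(1,4)] Abar_nonneg[OF assms(2,3)] Abar_le_1[OF assms(2,3)]
    Abar_nonneg[OF assms(2,4)] Abar_le_1[OF assms(2,4)]
  unfolding rho_AB_def by auto

lemma rho_AB_antimono_upper:
  assumes "aggregation_fun A" "aggregation_fun B" "a \<in> IFV" "b \<in> IFV" "p \<in> IFV"
    and "le_AB A B a b" "ifv_le a p" "ifv_le b p"
  shows "rho_AB A B b p \<le> rho_AB A B a p"
proof -
  have "Abar A a \<le> Abar A p" "Abar A b \<le> Abar A p" "Abar B b \<le> Abar B p"
    using Abar_mono assms by blast+
  then show ?thesis
    using assms(6) Abar_nonneg[OF assms(2,4)] Abar_le_1[OF assms(2,4)]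
      Abar_nonneg[OF assms(2,5)] Abar_le_1[OF assms(2,5)]
    unfolding rho_AB_def le_AB_def by (auto simp: abs_if)
qed

lemma rho_AB_mono_lower:
  assumes "aggregation_fun A" "aggregation_fun B" "a \<in> IFV" "b \<in> IFV" "q \<in> IFV"
    and "le_AB A B a b" "ifv_le q a" "ifv_le q b"
  shows "rho_AB A B a q \<le> rho_AB A B b q"
proof -
  have "Abar A q \<le> Abar A a" "Abar A q \<le> Abar A b" "Abar B q \<le> Abar B a"
    using Abar_mono assms by blast+
  then show ?thesis
    using assms(6) Abar_nonneg[OF assms(2,3)] Abar_le_1[OF assms(2,3)]
      Abar_nonneg[OF assms(2,5)] Abar_le_1[OF assms(2,5)]
    unfolding rho_AB_def le_AB_def by (auto simp: abs_if)
qed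

lemma divide_add_mono:
  fixes a1 a2 b1 b2 :: real
  assumes "0 \<le> a1" "a1 \<le> a2" "0 \<le> b2" "b2 \<le> b1"
  shows "a1 / (a1 + b1) \<le> a2 / (a2 + b2)"
proof (cases "a1 = 0")
  case True
  then show ?thesis using assms by simp
next
  case False
  then have "0 < a1 + b1" "0 < a2 + b2" using assms by auto
  moreover have "a1 * b2 \<le> a2 * b1" using assms by (meson mult_mono order_trans)
  ultimately show ?thesis by (simp add: divide_simps algebra_simps)
qed

lemma simil_nonneg:
  assumes "\<And>j. j < m \<Longrightarrow> 0 \<le> \<omega> j" "(\<Sum>j<m. \<omega> j) = 1"
    and "\<And>j. j < m \<Longrightarrow> \<rho> (rnorm ben r i j) (P j) \<le> 1"
  shows "0 \<le> simil \<rho> m ben \<omega> r P i"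
proof -
  have "(\<Sum>j<m. \<omega> j * \<rho> (rnorm ben r i j) (P j)) \<le> (\<Sum>j<m. \<omega> j)"
    using assms(1,3) by (intro sum_mono) (simp add: mult_left_le)
  then show ?thesis using assms(2) unfolding simil_def by linarith
qed

lemma simil_mono:
  assumes "\<And>j. j < m \<Longrightarrow> 0 \<le> \<omega> j"
    and "\<And>j. j < m \<Longrightarrow> \<rho> (rnorm ben r i2 j) (P j) \<le> \<rho> (rnorm ben r i1 j) (P j)"
  shows "simil \<rho> m ben \<omega> r P i1 \<le> simil \<rho> m ben \<omega> r P i2"
proof -
  have "(\<Sum>j<m. \<omega> j * \<rho> (rnorm ben r i2 j) (P j)) \<le> (\<Sum>j<m. \<omega> j * \<rho> (rnorm ben r i1 j) (P j))"
    using assms by (intro sum_mono mult_left_mono) auto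
  then show ?thesis unfolding simil_def by linarith
qed

lemma closeness_mono:
  assumes w: "\<And>j. j < m \<Longrightarrow> 0 \<le> \<omega> j" and w_sum: "(\<Sum>j<m. \<omega> j) = 1"
    and pos_le_1: "\<And>j. j < m \<Longrightarrow> \<rho> (rnorm ben r i1 j) (ideal_pos n ben r j) \<le> 1"
    and neg_le_1: "\<And>j. j < m \<Longrightarrow> \<rho> (rnorm ben r i2 j) (ideal_neg n ben r j) \<le> 1"
    and pos: "\<And>j. j < m \<Longrightarrow>
      \<rho> (rnorm ben r i2 j) (ideal_pos n ben r j) \<le> \<rho> (rnorm ben r i1 j) (ideal_pos n ben r j)"
    and neg: "\<And>j. j < m \<Longrightarrow>
      \<rho> (rnorm ben r i1 j) (ideal_neg n ben r j) \<le> \<rho> (rnorm ben r i2 j) (ideal_neg n ben r j)"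
  shows "closeness \<rho> n m ben \<omega> r i1 \<le> closeness \<rho> n m ben \<omega> r i2"
  unfolding closeness_def Let_def
  by (intro divide_add_mono simil_nonneg[OF w w_sum] simil_mono[OF w] pos_le_1 neg_le_1 pos neg)

lemma closeness_mono_wrt:
  fixes le :: "real \<times> real \<Rightarrow> real \<times> real \<Rightarrow> bool"
  assumes r: "\<And>i j. i < n \<Longrightarrow> j < m \<Longrightarrow> r i j \<in> IFV"
    and w: "\<And>j. j < m \<Longrightarrow> 0 \<le> \<omega> j" and w_sum: "(\<Sum>j<m. \<omega> j) = 1"
    and le_1: "\<And>a b. a \<in> IFV \<Longrightarrow> b \<in> IFV \<Longrightarrow> \<rho> a b \<le> 1"
    and upper: "\<And>a b p. a \<in> IFV \<Longrightarrow> b \<in> IFV \<Longrightarrow> p \<in> IFV \<Longrightarrow>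
      le a b \<Longrightarrow> ifv_le a p \<Longrightarrow> ifv_le b p \<Longrightarrow> \<rho> b p \<le> \<rho> a p"
    and lower: "\<And>a b q. a \<in> IFV \<Longrightarrow> b \<in> IFV \<Longrightarrow> q \<in> IFV \<Longrightarrow>
      le a b \<Longrightarrow> ifv_le q a \<Longrightarrow> ifv_le q b \<Longrightarrow> \<rho> a q \<le> \<rho> b q"
    and i: "i1 < n" "i2 < n"
    and le: "\<And>j. j < m \<Longrightarrow> le (rnorm ben r i1 j) (rnorm ben r i2 j)"
  shows "closeness \<rho> n m ben \<omega> r i1 \<le> closeness \<rho> n m ben \<omega> r i2"
proof -
  have rn: "rnorm ben r i j \<in> IFV" if "i < n" "j < m" for i j
    using r that by (intro rnorm_in_IFV)
  have ideals: "ideal_pos n ben r j \<in> IFV" "ideal_neg n ben r j \<in> IFV" if "j < m" for j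
    using i r that by (auto intro: ideal_pos_in_IFV ideal_neg_in_IFV)
  show ?thesis
    using rn i ideals le
    by (intro closeness_mono w w_sum le_1 upper lower ifv_le_ideal_pos ifv_le_ideal_neg) auto
qed

text \<open>Continuity of \<open>A\<close>, \<open>B\<close> and injectivity of \<open>(A, B)\<close> make \<open>le_AB\<close> a linear order
and \<open>rho_AB\<close> a metric, but monotonicity does not need them; likewise only \<open>0 \<le> \<omega> j\<close>
and \<open>0 \<le> lam\<close> are used.\<close>

theorem theorem7:
  fixes n m :: nat and ben :: "nat \<Rightarrow> bool" and r :: "nat \<Rightarrow> nat \<Rightarrow> real \<times> real"
    and \<omega> :: "nat \<Rightarrow> real" and lam :: real and A B :: "real \<Rightarrow> real \<Rightarrow> real"
  assumes r_ifv: "\<And>i j. i < n \<Longrightarrow> j < m \<Longrightarrow> r i j \<in> IFV"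
    and w_pos: "\<And>j. j < m \<Longrightarrow> 0 < \<omega> j \<and> \<omega> j \<le> 1"
    and w_sum: "(\<Sum>j<m. \<omega> j) = 1"
    and lam: "lam \<ge> 1"
    and A_agg: "aggregation_fun A" and B_agg: "aggregation_fun B"
    and A_cont: "continuous_on ({0..1} \<times> {0..1}) (\<lambda>(x, y). A x y)"
    and B_cont: "continuous_on ({0..1} \<times> {0..1}) (\<lambda>(x, y). B x y)"
    and AB_inj: "\<And>x1 y1 x2 y2. x1 \<in> {0..1} \<Longrightarrow> y1 \<in> {0..1} \<Longrightarrow> x2 \<in> {0..1} \<Longrightarrow> y2 \<in> {0..1} \<Longrightarrow>
                   A x1 y1 = A x2 y2 \<Longrightarrow> B x1 y1 = B x2 y2 \<Longrightarrow> (x1, y1) = (x2, y2)"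
  shows "(\<forall>i1<n. \<forall>i2<n. (\<forall>j<m. zx_le (rnorm ben r i1 j) (rnorm ben r i2 j)) \<longrightarrow>
            closeness (rho_zx lam) n m ben \<omega> r i1 \<le> closeness (rho_zx lam) n m ben \<omega> r i2)
       \<and> (\<forall>i1<n. \<forall>i2<n. (\<forall>j<m. le_AB A B (rnorm ben r i1 j) (rnorm ben r i2 j)) \<longrightarrow>
            closeness (rho_AB A B) n m ben \<omega> r i1 \<le> closeness (rho_AB A B) n m ben \<omega> r i2)"
proof -
  have w: "\<And>j. j < m \<Longrightarrow> 0 \<le> \<omega> j" using w_pos by force
  have lam0: "0 \<le> lam" using lam by simp
  show ?thesis
  proof (intro conjI allI impI)
    fix i1 i2 assume "i1 < n" "i2 < n" "\<forall>j<m. zx_le (rnorm ben r i1 j) (rnorm ben r i2 j)"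
    then show "closeness (rho_zx lam) n m ben \<omega> r i1 \<le> closeness (rho_zx lam) n m ben \<omega> r i2"
      using r_ifv w w_sum rho_zx_le_1[OF lam0] rho_zx_antimono_upper[OF lam0] rho_zx_mono_lower[OF lam0]
      by (intro closeness_mono_wrt[where le = zx_le]) auto
  next
    fix i1 i2 assume "i1 < n" "i2 < n" "\<forall>j<m. le_AB A B (rnorm ben r i1 j) (rnorm ben r i2 j)"
    then show "closeness (rho_AB A B) n m ben \<omega> r i1 \<le> closeness (rho_AB A B) n m ben \<omega> r i2"
      using r_ifv w w_sum rho_AB_le_1[OF A_agg B_agg]
        rho_AB_antimono_upper[OF A_agg B_agg] rho_AB_mono_lower[OF A_agg B_agg]
      by (intro closeness_mono_wrt[where le = "le_AB A B"]) auto
  qed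
qed

end
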